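(* For $a\in[1,2]$ and $b>1$ define $g(a,b)=x\,x_1+y\,y_1$, where $$x=\frac{\sqrt{a^2-1}\,(a^3-8)}{a^6},\quad x_1=(\sqrt{a^2-1}-\sqrt{b^2-1})^3+a^3,\quad y=\frac{\sqrt{b^2-1}\,(b^3-8)}{b^6},\quad y_1=(\sqrt{a^2-1}-\sqrt{b^2-1})^3+b^3.$$ Then for every $a\in(1,2)$ there exists a unique $b=\hat b(a)\in(\sqrt2,5/2)$ such that $g(a,b)<0$ for $\sqrt2<b<\hat b(a)$, $g(a,\hat b(a))=0$, and $g(a,b)>0$ for $\hat b(a)<b<5/2$. *)

theory Defs
  imports Complex_Main
begin

definition g :: "real \<Rightarrow> real \<Rightarrow> real" where
  "g a b =
    (let x  = sqrt (a^2 - 1) * (a^3 - 8) / a^6;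
         x1 = (sqrt (a^2 - 1) - sqrt (b^2 - 1))^3 + a^3;
         y  = sqrt (b^2 - 1) * (b^3 - 8) / b^6;
         y1 = (sqrt (a^2 - 1) - sqrt (b^2 - 1))^3 + b^3
     in x * x1 + y * y1)"

end

theory Submission
  imports Defs
begin

text \<open>
  Write \<open>leg b = sqrt (b^2 - 1)\<close>. For fixed \<open>a\<close>, the map \<open>g a\<close> is negative at \<open>sqrt 2\<close>,
  positive at \<open>5/2\<close> and strictly increasing in between, so it changes sign exactly once.
  Its \<open>b\<close>-derivative is \<open>b / leg b\<close> times a slope that, as a function of
  \<open>u = leg a - leg b\<close>, is a nonnegative term plus a cubic \<open>u^2 (c u - d) + const\<close>; on the
  admissible range \<open>|u| \<le> leg b\<close> this cubic is bounded below by its values at \<open>u = 0\<close>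
  (that is \<open>a = b\<close>) and \<open>u = - leg b\<close> (that is \<open>a = 1\<close>), both of which reduce to
  polynomial inequalities in \<open>b\<close> alone. The sign at \<open>sqrt 2\<close>, where \<open>leg b = 1\<close>, is
  immediate; the sign at \<open>5/2\<close> follows from monotone interval bounds on a cover of the
  \<open>a\<close>-range.
\<close>

definition leg :: "real \<Rightarrow> real" where
  "leg b = sqrt (b^2 - 1)"

definition weight :: "real \<Rightarrow> real" where
  "weight b = leg b * (b^3 - 8) / b^6"

lemma g_eq: "g a b = weight a * ((leg a - leg b)^3 + a^3) + weight b * ((leg a - leg b)^3 + b^3)"
  by (simp add: g_def weight_def leg_def Let_def)

lemma leg_pos: "1 < b \<Longrightarrow> 0 < leg b"
  by (simp add: leg_def)

lemma leg_squared: "1 \<le> b \<Longrightarrow> (leg b)^2 = b^2 - 1"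
  by (simp add: leg_def one_le_power)

lemma leg_one: "leg 1 = 0"
  by (simp add: leg_def)

lemma weight_one: "weight 1 = 0"
  by (simp add: weight_def leg_one)

lemma weight_neg:
  assumes "1 < b" and "b < 2" shows "weight b < 0"
proof -
  have "b^3 < 2^3" using assms by (intro power_strict_mono) auto
  then show ?thesis using assms leg_pos[of b] by (simp add: weight_def mult_pos_neg divide_neg_pos)
qed

lemma weight_pos:
  assumes "2 < b" shows "0 < weight b"
proof -
  have "2^3 < b^3" using assms by (intro power_strict_mono) auto
  then show ?thesis using assms leg_pos[of b] by (simp add: weight_def)
qed

lemma sqrt_two_le_bounds:
  assumes "sqrt 2 \<le> b" shows "1 < b" and "2 \<le> b^2"
proof -
  show "1 < b" using assms by (smt (verit) real_sqrt_gt_1_iff)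
  show "2 \<le> b^2" using power_mono[OF assms, of 2] by simp
qed

subsection \<open>The derivative of \<open>g a\<close>\<close>

lemma leg_has_real_derivative:
  assumes "1 < b" shows "(leg has_real_derivative b / leg b) (at b)"
proof -
  have "0 < b^2 - 1" using assms by (simp add: one_less_power)
  then show ?thesis unfolding leg_def
    by (auto intro!: derivative_eq_intros simp: field_simps)
qed

definition weight_rate :: "real \<Rightarrow> real" where
  "weight_rate b = (- 2 * b^5 + 3 * b^3 + 40 * b^2 - 48) / b^8"

lemma weight_rate_eq:
  "b \<noteq> 0 \<Longrightarrow> weight_rate b = (b^3 - 8) / b^6 + (b^2 - 1) / b * (48 / b^7 - 3 / b^4)"
  unfolding weight_rate_def by (simp add: divide_simps) algebra

lemma weight_has_real_derivative:
  assumes "1 < b" shows "(weight has_real_derivative b / leg b * weight_rate b) (at b)"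
proof -
  have b: "b \<noteq> 0" using assms by simp
  have leg: "0 < leg b" "b^2 - 1 = (leg b)^2" using assms by (simp_all add: leg_pos leg_squared)
  have quotient: "((\<lambda>x. (x^3 - 8) / x^6) has_real_derivative 48 / b^7 - 3 / b^4) (at b)"
    by (rule derivative_eq_intros refl | simp add: b)+ (simp add: b divide_simps, algebra)
  have "weight = (\<lambda>x. leg x * ((x^3 - 8) / x^6))"
    by (simp add: weight_def fun_eq_iff)
  then have "(weight has_real_derivative
      b / leg b * ((b^3 - 8) / b^6) + (48 / b^7 - 3 / b^4) * leg b) (at b)"
    using DERIV_mult[OF leg_has_real_derivative[OF assms] quotient] by simp
  moreover have "b / leg b * (R + (leg b)^2 / b * D) = b / leg b * R + D * leg b" for R D
    using leg(1) b by (simp add: field_simps power2_eq_square)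
  ultimately show ?thesis unfolding weight_rate_eq[OF b] leg(2) by presburger
qed

definition g_slope :: "real \<Rightarrow> real \<Rightarrow> real" where
  "g_slope a b = - 3 * (weight a + weight b) * (leg a - leg b)^2
     + weight_rate b * ((leg a - leg b)^3 + b^3) + 3 * b * leg b * weight b"

lemma g_has_real_derivative:
  assumes "1 < b" shows "(g a has_real_derivative b / leg b * g_slope a b) (at b)"
proof -
  have "g a = (\<lambda>x. weight a * ((leg a - leg x)^3 + a^3) + weight x * ((leg a - leg x)^3 + x^3))"
    by (simp add: g_eq fun_eq_iff)
  moreover have "((\<lambda>x. weight a * ((leg a - leg x)^3 + a^3) + weight x * ((leg a - leg x)^3 + x^3))
    has_real_derivative b / leg b * g_slope a b) (at b)"
    apply (rule derivative_eq_intros leg_has_real_derivative[OF assms]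
        weight_has_real_derivative[OF assms] refl)+
    using leg_pos[OF assms] unfolding g_slope_def by (simp add: field_simps power2_eq_square)
  ultimately show ?thesis by simp
qed

subsection \<open>Positivity of the slope\<close>

lemma sq_mult_affine_ge_min:
  fixes c d t u :: real
  assumes "0 \<le> c" and "\<bar>u\<bar> \<le> t"
  shows "min 0 (t^2 * (- c * t - d)) \<le> u^2 * (c * u - d)"
proof (cases "0 \<le> c * u - d")
  case True
  then show ?thesis by (simp add: min_le_iff_disj)
next
  case False
  have "c * - t \<le> c * u" using assms by (intro mult_left_mono) auto
  then have "t^2 * (- c * t - d) \<le> t^2 * (c * u - d)" by (simp add: mult_left_mono)
  also have "\<dots> \<le> u^2 * (c * u - d)"
    using False power_mono[OF assms(2), of 2] by (intro mult_right_mono_neg) auto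
  finally show ?thesis by simp
qed

lemma weight_rate_pos:
  assumes "sqrt 2 \<le> b" and "b \<le> 5/2"
  shows "0 < weight_rate b"
proof -
  have b: "0 < b" "2 \<le> b^2" "0 < b^3" using sqrt_two_le_bounds[OF assms(1)] by auto
  have numerator: "- 2 * b^5 + 3 * b^3 + 40 * b^2 - 48 = b^2 * (40 - 2 * b^3) + 3 * b^3 - 48"
    by algebra
  have "0 < - 2 * b^5 + 3 * b^3 + 40 * b^2 - 48"
  proof (cases "b \<le> 2")
    case True
    have "b^3 \<le> 2^3" using True b by (intro power_mono) auto
    then have "b^2 * 24 \<le> b^2 * (40 - 2 * b^3)" by (intro mult_left_mono) auto
    then show ?thesis unfolding numerator using b by linarith
  next
    case False
    have "b^3 \<le> (5/2)^3" using assms b by (intro power_mono) auto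
    then have "b^2 * (35/4) \<le> b^2 * (40 - 2 * b^3)" by (intro mult_left_mono) (auto simp: power_divide)
    moreover have "4 \<le> b^2" "8 \<le> b^3"
      using power_mono[of 2 b 2] power_mono[of 2 b 3] False by simp_all
    ultimately show ?thesis unfolding numerator by linarith
  qed
  then show ?thesis using b by (simp add: weight_rate_def)
qed

lemma g_slope_diag:
  assumes "1 \<le> b" shows "g_slope b b = (b^5 + 16 * b^2 - 24) / b^5"
proof -
  have "g_slope b b = weight_rate b * b^3 + 3 * b * (leg b)^2 * (b^3 - 8) / b^6"
    by (simp add: g_slope_def weight_def power2_eq_square)
  also have "\<dots> = (b^5 + 16 * b^2 - 24) / b^5"
    using assms unfolding leg_squared[OF assms] weight_rate_def by (simp add: divide_simps) algebra
  finally show ?thesis .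
qed

lemma g_slope_diag_pos:
  assumes "sqrt 2 \<le> b" shows "0 < g_slope b b"
proof -
  have b: "1 < b" "2 \<le> b^2" using sqrt_two_le_bounds[OF assms] by auto
  then have "0 < b^5 + 16 * b^2 - 24" by (smt (verit) zero_less_power)
  then show ?thesis using b by (simp add: g_slope_diag)
qed

lemma g_slope_one:
  assumes "1 \<le> b"
  shows "g_slope 1 b
    = (b^3 * (b^5 + 16 * b^2 - 24) - (leg b)^3 * (b^5 + 3 * b^3 + 16 * b^2 - 48)) / b^8"
proof -
  have "g_slope 1 b
      = weight_rate b * (b^3 - (leg b)^3) + 3 * ((leg b)^2 * b - (leg b)^3) * (b^3 - 8) / b^6"
    using assms unfolding g_slope_def weight_def[of b]
    by (simp add: leg_one weight_one divide_simps) algebra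
  also have "\<dots> = (b^3 * (b^5 + 16 * b^2 - 24) - (leg b)^3 * (b^5 + 3 * b^3 + 16 * b^2 - 48)) / b^8"
    using assms unfolding leg_squared[OF assms] weight_rate_def by (simp add: divide_simps) algebra
  finally show ?thesis .
qed

lemma nonic_pos:
  fixes b :: real
  assumes "2 \<le> b" and "b \<le> 5/2"
  shows "0 < - 12 * b^9 + 30 * b^7 + 384 * b^6 - 17 * b^5 - 672 * b^4 + 3 * b^3 + 304 * b^2 - 48"
proof -
  have "b^3 \<le> (5/2)^3" and b2: "2^2 \<le> b^2" using assms by (intro power_mono; simp)+
  then have "b^3 * b^6 \<le> (5/2)^3 * b^6" by (intro mult_right_mono) auto
  then have "12 * b^9 \<le> 375/2 * b^6" by (simp add: power_add[symmetric] power_divide)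
  moreover have "4 * b^4 \<le> b^2 * b^4" "1 * b^5 \<le> b^2 * b^5"
    using b2 assms by (intro mult_right_mono; simp)+
  then have "4 * b^4 \<le> b^6" "b^5 \<le> b^7" by (simp_all add: power_add[symmetric])
  moreover have "0 < b^3" "0 < b^4" "0 < b^5" "4 \<le> b^2" using assms b2 by simp_all
  ultimately show ?thesis by linarith
qed

lemma two_mul_leg_le:
  assumes "1 < b" shows "2 * b * leg b \<le> 2 * b^2 - 1"
proof (rule power2_le_imp_le)
  have "(2 * b * leg b)^2 = 4 * b^2 * (b^2 - 1)"
    using assms by (simp add: power_mult_distrib leg_squared)
  moreover have "(2 * b^2 - 1)^2 = 4 * b^2 * (b^2 - 1) + 1"
    by (simp add: algebra_simps power2_eq_square)
  ultimately show "(2 * b * leg b)^2 \<le> (2 * b^2 - 1)^2" by simp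
  show "0 \<le> 2 * b^2 - 1" using one_less_power[OF assms, of 2] by simp
qed

text \<open>For \<open>b > 2\<close> the bound \<open>leg b \<le> b\<close> is too weak and \<open>two_mul_leg_le\<close> is used instead.\<close>

lemma leg_cube_lt:
  assumes "sqrt 2 \<le> b" and "b \<le> 5/2"
  shows "(leg b)^3 * (b^5 + 3 * b^3 + 16 * b^2 - 48) < b^3 * (b^5 + 16 * b^2 - 24)"
proof -
  define t Q P where "t = leg b" and "Q = b^5 + 3 * b^3 + 16 * b^2 - 48"
    and "P = b^3 * (b^5 + 16 * b^2 - 24)"
  have b: "1 < b" "2 \<le> b^2" using sqrt_two_le_bounds[OF assms(1)] by auto
  have t: "0 \<le> t" "t^2 = b^2 - 1" using b by (simp_all add: t_def leg_def leg_squared)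
  have "0 < b^5 + 16 * b^2 - 24" using b by (smt (verit) zero_less_power)
  then have P: "0 < P" unfolding P_def using b by simp
  show "t^3 * Q < P"
  proof (cases "b \<le> 2")
    case True
    show ?thesis
    proof (cases "0 < Q")
      case True
      have "t < b" using t b by (intro power_less_imp_less_base[of t 2]) auto
      then have "t^3 * Q < b^3 * Q" using True t by (intro mult_strict_right_mono power_strict_mono) auto
      also have "\<dots> = P - 3 * b^3 * (8 - b^3)" unfolding P_def Q_def by algebra
      also have "\<dots> \<le> P" using \<open>b \<le> 2\<close> b power_mono[of b 2 3] by simp
      finally show ?thesis .
    next
      case False
      then have "t^3 * Q \<le> 0" using t by (simp add: mult_nonneg_nonpos)
      then show ?thesis using P by simp
    qed
  next
    case False
    have "32 \<le> b^5" "0 < b^3" using False power_mono[of 2 b 5] b by simp_all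
    then have Q: "0 < Q" unfolding Q_def using b by linarith
    have "(2 * b * t)^3 \<le> (2 * b^2 - 1)^3"
      using two_mul_leg_le[OF b(1)] b t by (intro power_mono) (auto simp: t_def)
    then have "(2 * b * t)^3 * Q \<le> (2 * b^2 - 1)^3 * Q" using Q by (simp add: mult_right_mono)
    also have "\<dots> < 8 * b^3 * P"
    proof -
      have "8 * b^3 * P - (2 * b^2 - 1)^3 * Q
          = - 12 * b^9 + 30 * b^7 + 384 * b^6 - 17 * b^5 - 672 * b^4 + 3 * b^3 + 304 * b^2 - 48"
        unfolding P_def Q_def by algebra
      then show ?thesis using nonic_pos[of b] False assms(2) by linarith
    qed
    finally have "8 * b^3 * (t^3 * Q) < 8 * b^3 * P" by (simp add: power_mult_distrib)
    then show ?thesis using b by simp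
  qed
qed

lemma g_slope_one_pos:
  assumes "sqrt 2 \<le> b" and "b \<le> 5/2"
  shows "0 < g_slope 1 b"
  using leg_cube_lt[OF assms] sqrt_two_le_bounds[OF assms(1)] by (simp add: g_slope_one)

lemma g_slope_pos:
  assumes "1 < a" and "a < 2" and "sqrt 2 \<le> b" and "b \<le> 5/2"
  shows "0 < g_slope a b"
proof -
  define s t u c d where "s = leg a" and "t = leg b" and "u = s - t"
    and "c = weight_rate b" and "d = 3 * weight b"
  have "1 \<le> t" using sqrt_two_le_bounds[OF assms(3)] by (simp add: t_def leg_def)
  moreover have "0 \<le> s" "s < 2"
  proof -
    have "a^2 < 2^2" using assms by (intro power_strict_mono) auto
    then show "0 \<le> s" "s < 2" using assms by (simp_all add: s_def leg_def real_less_lsqrt)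
  qed
  ultimately have "\<bar>u\<bar> \<le> t" unfolding u_def by linarith
  have split: "g_slope a b = - 3 * weight a * u^2 + u^2 * (c * u - d) + g_slope b b"
    unfolding g_slope_def s_def t_def u_def c_def d_def
    by (simp add: power2_eq_square power3_eq_cube algebra_simps)
  have one: "g_slope 1 b = t^2 * (- c * t - d) + g_slope b b"
    unfolding g_slope_def t_def c_def d_def leg_one weight_one
    by (simp add: power2_eq_square power3_eq_cube algebra_simps)
  have "0 \<le> - 3 * weight a * u^2" using weight_neg[OF assms(1,2)] by (simp add: mult_nonpos_nonneg)
  moreover have "min 0 (t^2 * (- c * t - d)) \<le> u^2 * (c * u - d)"
    using weight_rate_pos[OF assms(3,4)] \<open>\<bar>u\<bar> \<le> t\<close> unfolding c_def
    by (intro sq_mult_affine_ge_min) auto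
  moreover have "0 < g_slope b b" "0 < g_slope 1 b"
    using g_slope_diag_pos[OF assms(3)] g_slope_one_pos[OF assms(3,4)] by auto
  ultimately show ?thesis unfolding split using one by linarith
qed

lemma g_strict_mono_on:
  assumes "1 < a" and "a < 2"
  shows "strict_mono_on {sqrt 2..5/2} (g a)"
proof (rule strict_mono_onI)
  have deriv: "\<exists>D. (g a has_real_derivative D) (at b) \<and> 0 < D" if "sqrt 2 \<le> b" "b \<le> 5/2" for b
  proof -
    have "1 < b" using sqrt_two_le_bounds[OF that(1)] by simp
    then show ?thesis
      using g_has_real_derivative[of b a] g_slope_pos[OF assms that] leg_pos[of b]
      by (intro exI[of _ "b / leg b * g_slope a b"]) auto
  qed
  fix x y assume "x \<in> {sqrt 2..5/2}" "y \<in> {sqrt 2..5/2}" "x < y"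
  then show "g a x < g a y" by (intro DERIV_pos_imp_increasing[OF \<open>x < y\<close>] deriv) auto
qed

lemma g_continuous_on: "continuous_on {1<..} (g a)"
proof (rule continuous_at_imp_continuous_on, rule ballI)
  fix b :: real assume "b \<in> {1<..}"
  then show "isCont (g a) b" using DERIV_isCont[OF g_has_real_derivative] by simp
qed

subsection \<open>The signs at the endpoints\<close>

lemma g_sqrt_two_neg:
  assumes "1 < a" and "a < 2"
  shows "g a (sqrt 2) < 0"
proof -
  have sqrt_two: "leg (sqrt 2) = 1" "1 < sqrt 2" "sqrt 2 < 2"
    by (simp_all add: leg_def real_less_lsqrt)
  have "- 1 \<le> (leg a - 1)^3"
    using power_mono_odd[of 3 "- 1" "leg a - 1"] leg_pos[OF assms(1)] by simp
  moreover have "1 < a^3" "1 < sqrt 2 ^ 3" using assms sqrt_two by simp_all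
  ultimately have "0 < (leg a - 1)^3 + a^3" "0 < (leg a - 1)^3 + sqrt 2 ^ 3" by linarith+
  then have "weight a * ((leg a - 1)^3 + a^3) < 0"
    and "weight (sqrt 2) * ((leg a - 1)^3 + sqrt 2 ^ 3) < 0"
    using weight_neg[OF assms] weight_neg[OF sqrt_two(2,3)] by (simp_all add: mult_neg_pos)
  then show ?thesis unfolding g_eq sqrt_two(1) by simp
qed

lemma leg_five_halves_bounds: "2.2912 \<le> leg (5/2)" "leg (5/2) \<le> 2.2913"
  unfolding leg_def by (rule real_le_rsqrt real_le_lsqrt; simp add: power_divide)+

lemma g_five_halves_eq:
  assumes "0 < a"
  shows "g a (5/2) = leg a * (1 - 8 / a^3) + leg a * (8 - a^3) / a^6 * (leg (5/2) - leg a)^3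
    - 488/15625 * leg (5/2) * (leg (5/2) - leg a)^3 + 61/125 * leg (5/2)"
proof -
  have "weight a * ((leg a - leg (5/2))^3 + a^3)
      = leg a * (1 - 8 / a^3) + leg a * (8 - a^3) / a^6 * (leg (5/2) - leg a)^3"
    using assms by (simp add: weight_def divide_simps) algebra
  moreover have "weight (5/2) * ((leg a - leg (5/2))^3 + (5/2)^3)
      = - 488/15625 * leg (5/2) * (leg (5/2) - leg a)^3 + 61/125 * leg (5/2)"
    by (simp add: weight_def power_divide) algebra
  ultimately show ?thesis unfolding g_eq by simp
qed

text \<open>
  Each of the four summands of \<open>g_five_halves_eq\<close> is monotone in \<open>a\<close>, \<open>leg a\<close> and
  \<open>leg (5/2)\<close>; this bounds \<open>g a (5/2)\<close> from below when \<open>a \<in> [a0, a1]\<close>,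
  \<open>leg a \<in> [s0, s1]\<close> and \<open>leg (5/2) \<in> [2.2912, 2.2913]\<close>.
\<close>

definition five_halves_lower_bound :: "real \<Rightarrow> real \<Rightarrow> real \<Rightarrow> real \<Rightarrow> real" where
  "five_halves_lower_bound a0 a1 s0 s1 = s1 * (1 - 8 / a0^3) + s0 * (8 - a1^3) / a1^6 * (2.2912 - s1)^3
      - 488/15625 * 2.2913 * (2.2913 - s0)^3 + 61/125 * 2.2912"

lemma five_halves_lower_bound_le:
  assumes a: "1 \<le> a0" "a0 \<le> a" "a \<le> a1" "a1 \<le> 2"
    and s: "0 \<le> s0" "s0 \<le> leg a" "leg a \<le> s1" "s1 \<le> 2.2912"
  shows "five_halves_lower_bound a0 a1 s0 s1 \<le> g a (5/2)"
proof -
  define s t where "s = leg a" and "t = leg (5/2)"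
  have t: "2.2912 \<le> t" "t \<le> 2.2913" using leg_five_halves_bounds by (simp_all add: t_def)
  have cubes: "a0^3 \<le> a^3" "a^3 \<le> a1^3" "a0^3 \<le> 2^3" "a^3 \<le> 2^3" "a1^3 \<le> 2^3" "a^6 \<le> a1^6"
    using a by (intro power_mono; linarith)+
  have "s1 * (1 - 8 / a0^3) \<le> s * (1 - 8 / a0^3)"
    using cubes s a by (intro mult_right_mono_neg) (auto simp: s_def)
  also have "\<dots> \<le> s * (1 - 8 / a^3)"
    using cubes s a by (intro mult_left_mono divide_left_mono diff_left_mono) (auto simp: s_def)
  finally have first: "s1 * (1 - 8 / a0^3) \<le> s * (1 - 8 / a^3)" .
  have "s0 * (8 - a1^3) / a1^6 \<le> s * (8 - a^3) / a^6"
    using cubes s a by (intro frac_le mult_mono) (auto simp: s_def)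
  moreover have "0 \<le> s * (8 - a^3)" using cubes s by (simp add: s_def)
  ultimately have second:
    "s0 * (8 - a1^3) / a1^6 * (2.2912 - s1)^3 \<le> s * (8 - a^3) / a^6 * (t - s)^3"
    using cubes s t a by (intro mult_mono power_mono) (auto simp: s_def)
  have third: "488/15625 * t * (t - s)^3 \<le> 488/15625 * 2.2913 * (2.2913 - s0)^3"
    using s t by (intro mult_mono power_mono) (auto simp: s_def)
  show ?thesis
    using g_five_halves_eq[of a] first second third t a
    unfolding five_halves_lower_bound_def s_def t_def by linarith
qed

lemma g_five_halves_pos_on_cell:
  assumes "1 \<le> a0" "a0 \<le> a" "a \<le> a1" "a1 \<le> 2"
    and "0 \<le> s0" "s0^2 \<le> a0^2 - 1" "a1^2 - 1 \<le> s1^2" "0 \<le> s1" "s1 \<le> 2.2912"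
    and "0 < five_halves_lower_bound a0 a1 s0 s1"
  shows "0 < g a (5/2)"
proof -
  have "a0^2 \<le> a^2" "a^2 \<le> a1^2" using assms by (intro power_mono; linarith)+
  then have "s0 \<le> leg a" "leg a \<le> s1"
    unfolding leg_def using assms by (intro real_le_rsqrt real_le_lsqrt; linarith)+
  then show ?thesis using five_halves_lower_bound_le[of a0 a a1 s0 s1] assms by linarith
qed

text \<open>For small \<open>a\<close> no interval bounds are needed: \<open>leg (5/2) - leg a \<ge> a\<close> makes both summands of \<open>g\<close> nonnegative.\<close>

lemma g_five_halves_pos_small:
  assumes "1 < a" and "a \<le> 27/20"
  shows "0 < g a (5/2)"
proof -
  define s t where "s = leg a" and "t = leg (5/2)"
  have t: "2.2912 \<le> t" "t \<le> 2.2913" using leg_five_halves_bounds by (simp_all add: t_def)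
  have "a^2 \<le> (27/20)^2" using assms by (intro power_mono) auto
  then have "a^2 - 1 \<le> 0.94^2" by (simp add: power_divide)
  then have "s \<le> 0.94" unfolding s_def leg_def by (rule real_le_lsqrt[rotated]) simp
  then have s: "0 \<le> s" "s \<le> 0.94" using assms by (simp_all add: s_def leg_def)
  have "(s - t)^3 \<le> (- a)^3" using s t assms by (intro power_mono_odd) auto
  then have "weight a * ((s - t)^3 + a^3) \<ge> 0"
    using weight_neg[of a] assms by (intro mult_nonpos_nonpos) auto
  moreover have "(- 2.2913)^3 \<le> (s - t)^3" using s t by (intro power_mono_odd) auto
  then have "weight (5/2) * ((s - t)^3 + (5/2)^3) > 0"
    using weight_pos[of "5/2"] by (intro mult_pos_pos) (auto simp: power_divide)
  ultimately show ?thesis unfolding g_eq s_def t_def by linarith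
qed

lemma g_five_halves_pos:
  assumes "1 < a" and "a < 2"
  shows "0 < g a (5/2)"
proof (cases "a \<le> 27/20")
  case True
  show ?thesis using g_five_halves_pos_small[OF assms(1) True] .
next
  case False
  define cells :: "(real \<times> real \<times> real \<times> real) list" where "cells =
    [(27/20, 89/64, 181/200, 121/125), (89/64, 229/160, 193/200, 41/40),
     (229/160, 929/640, 511/500, 527/500), (929/640, 471/320, 1051/1000, 541/500),
     (471/320, 191/128, 1079/1000, 1109/1000), (191/128, 121/80, 553/500, 142/125),
     (121/80, 981/640, 1133/1000, 1163/1000), (981/640, 497/320, 29/25, 119/100),
     (497/320, 1007/640, 1187/1000, 152/125), (1007/640, 51/32, 1213/1000, 621/500),
     (51/32, 523/320, 1239/1000, 647/500), (523/320, 67/40, 1291/1000, 269/200),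
     (67/40, 281/160, 671/500, 289/200), (281/160, 147/80, 721/500, 1543/1000),
     (147/80, 2, 77/50, 867/500)]"
  have certified: "\<forall>(a0, a1, s0, s1) \<in> set cells. 1 \<le> a0 \<and> a1 \<le> 2
      \<and> 0 \<le> s0 \<and> s0^2 \<le> a0^2 - 1 \<and> a1^2 - 1 \<le> s1^2 \<and> 0 \<le> s1 \<and> s1 \<le> 2.2912
      \<and> 0 < five_halves_lower_bound a0 a1 s0 s1"
    by (simp add: cells_def five_halves_lower_bound_def power_divide)
  have "\<exists>(a0, a1, s0, s1) \<in> set cells. a0 \<le> a \<and> a \<le> a1"
    using False assms(2) unfolding cells_def by simp argo
  then show ?thesis using certified g_five_halves_pos_on_cell by fast
qed

subsection \<open>The unique sign change\<close>

lemma strict_mono_on_unique_sign_change: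
  fixes f :: "real \<Rightarrow> real"
  assumes "l \<le> u" and "continuous_on {l..u} f" and "strict_mono_on {l..u} f"
    and "f l < 0" and "0 < f u"
  shows "\<exists>!r. l < r \<and> r < u \<and> (\<forall>x. l < x \<and> x < r \<longrightarrow> f x < 0) \<and> f r = 0
    \<and> (\<forall>x. r < x \<and> x < u \<longrightarrow> f x > 0)"
proof -
  have less: "f x < f y" if "l \<le> x" "x < y" "y \<le> u" for x y
    using assms(3) that by (auto simp: strict_mono_on_def)
  obtain r where r: "l \<le> r" "r \<le> u" "f r = 0"
    using IVT'[of f l 0 u] assms by auto
  then have "l < r" "r < u" using assms(4,5) by (auto simp: order.order_iff_strict)
  show ?thesis
  proof (rule ex1I[of _ r], intro conjI allI impI)
    fix x assume "l < x \<and> x < r"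
    then show "f x < 0" using less[of x r] r by simp
  next
    fix x assume "r < x \<and> x < u"
    then show "f x > 0" using less[of r x] r by simp
  next
    fix r' assume "l < r' \<and> r' < u \<and> (\<forall>x. l < x \<and> x < r' \<longrightarrow> f x < 0) \<and> f r' = 0
      \<and> (\<forall>x. r' < x \<and> x < u \<longrightarrow> f x > 0)"
    then show "r' = r"
      using less[of r r'] less[of r' r] r by (cases r r' rule: linorder_cases) simp_all
  qed (use \<open>l < r\<close> \<open>r < u\<close> r in simp_all)
qed

theorem lemma4:
  fixes a :: real
  assumes "1 < a" and "a < 2"
  shows "\<exists>!bh. sqrt 2 < bh \<and> bh < 5/2 \<and>
           (\<forall>b. sqrt 2 < b \<and> b < bh \<longrightarrow> g a b < 0) \<and>
           g a bh = 0 \<and>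
           (\<forall>b. bh < b \<and> b < 5/2 \<longrightarrow> g a b > 0)"
proof (rule strict_mono_on_unique_sign_change)
  show "sqrt 2 \<le> 5/2" by (rule real_le_lsqrt) (simp_all add: power_divide)
  show "continuous_on {sqrt 2..5/2} (g a)"
    by (rule continuous_on_subset[OF g_continuous_on]) (auto dest: sqrt_two_le_bounds(1))
  show "strict_mono_on {sqrt 2..5/2} (g a)" using assms by (rule g_strict_mono_on)
  show "g a (sqrt 2) < 0" using assms by (rule g_sqrt_two_neg)
  show "0 < g a (5/2)" using assms by (rule g_five_halves_pos)
qed

end
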